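(* Let $g_0,g_\infty\in\mathbb C$, $g_1=-g_0-g_\infty$, and let $G(t,z)$ be the EGF of the GKP triangle $\left[\begin{array}{cc|c}\tfrac12,&1&g_0\\ -1,&-1&g_\infty\end{array}\right]$ (the case $(r_0,r_1,r_\infty)=(-\tfrac12,-\tfrac12,2)$). Then near $(0,0)$ $$G(t,z)=\Bigl(\frac{s_+}{t}\Bigr)^{g_0}\Bigl(\frac{s_-}{1-t}\Bigr)^{g_1},\qquad s_\pm=\frac12\pm\frac{4(t-\frac12)+z}{2\sqrt{4+8(t-\frac12)z+z^2}},$$ with the square root the branch equal to $2$ at $z=0$ and the powers the principal branches equal to $1$ at $z=0$ (so $s_++s_-=1$, $s_+=t$ at $z=0$).
   Context: GKP triangle: for complex parameters $\alpha,\beta,\gamma,\alpha',\beta',\gamma'$, the array $T_{n,k}=\left[\begin{array}{cc|c}\alpha,&\beta&\gamma\\ \alpha',&\beta'&\gamma'\end{array}\right]_{n,k}$ is defined by $T_{0,0}=1$, $T_{n,k}=0$ if $n<0$, $k<0$ or $k>n$, and $T_{n+1,k+1}=[\alpha n+\beta(k+1)+\gamma]T_{n,k+1}+[\alpha' n+\beta' k+\gamma']T_{n,k}$ for $n\ge0$, $k\in\mathbb Z$; its EGF is $G(t,z)=\sum_{n\ge0}\sum_{k=0}^nT_{n,k}t^kz^n/n!$. *)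

theory Defs
  imports "HOL-Analysis.Analysis"
begin

text \<open>GKP triangle with parameters a b c a' b' c' (alpha, beta, gamma, alpha', beta', gamma').\<close>
fun gkp :: "complex \<Rightarrow> complex \<Rightarrow> complex \<Rightarrow> complex \<Rightarrow> complex \<Rightarrow> complex \<Rightarrow> nat \<Rightarrow> int \<Rightarrow> complex" where
  "gkp a b c a' b' c' 0 k = (if k = 0 then 1 else 0)"
| "gkp a b c a' b' c' (Suc n) k =
     (if k < 0 \<or> k > int (Suc n) then 0
      else (a * of_nat n + b * of_int k + c) * gkp a b c a' b' c' n k
         + (a' * of_nat n + b' * of_int (k - 1) + c') * gkp a b c a' b' c' n (k - 1))"

text \<open>Square root branch equal to 2 at z = 0 (principal csqrt, valid near (0,0)).\<close>
definition sroot5 :: "complex \<Rightarrow> complex \<Rightarrow> complex" where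
  "sroot5 t z = csqrt (4 + 8 * (t - 1/2) * z + z^2)"

definition s_plus5 :: "complex \<Rightarrow> complex \<Rightarrow> complex" where
  "s_plus5 t z = 1/2 + (4 * (t - 1/2) + z) / (2 * sroot5 t z)"

definition s_minus5 :: "complex \<Rightarrow> complex \<Rightarrow> complex" where
  "s_minus5 t z = 1/2 - (4 * (t - 1/2) + z) / (2 * sroot5 t z)"

end

theory Submission
  imports Defs "HOL-Complex_Analysis.Complex_Analysis"
begin

text \<open>
  The row polynomials \<open>p\<^sub>n(t) = \<Sum>\<^sub>k T\<^sub>n\<^sub>,\<^sub>k t\<^sup>k\<close> of a GKP triangle satisfy
  \<open>p\<^sub>n\<^sub>+\<^sub>1 = (\<alpha>n + \<gamma> + (\<alpha>'n + \<gamma>')t) p\<^sub>n + (\<beta> + \<beta>'t) t p\<^sub>n'\<close>. Conversely, if \<open>F(t,z)\<close> is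
  holomorphic in \<open>z\<close>, differentiable in \<open>t\<close>, satisfies \<open>F(t,0) = 1\<close> and the first-order PDE
  \<open>(1 - (\<alpha> + \<alpha>'t)z) F\<^sub>z = (\<beta> + \<beta>'t) t F\<^sub>t + (\<gamma> + \<gamma>'t) F\<close>, then its Taylor coefficients in \<open>z\<close>
  obey the same recursion divided by \<open>n!\<close>, so \<open>F\<close> is the exponential generating function.

  For the triangle at hand the PDE reads \<open>(1 + (t - 1/2)z) F\<^sub>z = t(1-t) F\<^sub>t + (g\<^sub>0 + g\<^sub>\<infinity> t) F\<close>.
  Its characteristics are the level sets of \<open>s\<^sub>+\<close>, so for \<open>log F = g\<^sub>0 log(s\<^sub>+/t) + g\<^sub>1 log(s\<^sub>-/(1-t))\<close>
  only the explicit factors \<open>1/t\<close> and \<open>1/(1-t)\<close> contribute, producing the inhomogeneous term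
  \<open>g\<^sub>0(1-t) - g\<^sub>1 t = g\<^sub>0 + g\<^sub>\<infinity> t\<close>.
\<close>

section \<open>Row polynomials of a GKP triangle\<close>

lemma gkp_eq_0_outside: "k < 0 \<or> k > int n \<Longrightarrow> gkp a b c a' b' c' n k = 0"
  by (induction n arbitrary: k) auto

definition gkp_row :: "complex \<Rightarrow> complex \<Rightarrow> complex \<Rightarrow> complex \<Rightarrow> complex \<Rightarrow> complex \<Rightarrow> nat \<Rightarrow> complex \<Rightarrow> complex"
  where "gkp_row a b c a' b' c' n t = (\<Sum>k\<le>n. gkp a b c a' b' c' n (int k) * t ^ k)"

lemma gkp_row_0 [simp]: "gkp_row a b c a' b' c' 0 t = 1"
  by (simp add: gkp_row_def)

lemma gkp_row_has_field_derivative: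
  "(gkp_row a b c a' b' c' n has_field_derivative
     (\<Sum>k\<le>n. gkp a b c a' b' c' n (int k) * (of_nat k * t ^ (k - 1)))) (at t)"
  unfolding gkp_row_def by (auto intro!: derivative_eq_intros sum.cong simp: mult_ac)

lemma gkp_row_euler_operator:
  "t * deriv (gkp_row a b c a' b' c' n) t = (\<Sum>k\<le>n. of_nat k * gkp a b c a' b' c' n (int k) * t ^ k)"
proof -
  have "t * (gkp a b c a' b' c' n (int k) * (of_nat k * t ^ (k - 1)))
      = of_nat k * gkp a b c a' b' c' n (int k) * t ^ k" for k :: nat
    by (cases k) auto
  then show ?thesis
    unfolding DERIV_imp_deriv[OF gkp_row_has_field_derivative] sum_distrib_left
    by (rule sum.cong[OF refl])
qed

lemma gkp_row_Suc:
  "gkp_row a b c a' b' c' (Suc n) t =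
     (a * of_nat n + c + (a' * of_nat n + c') * t) * gkp_row a b c a' b' c' n t
     + (b + b' * t) * (t * deriv (gkp_row a b c a' b' c' n) t)"
proof -
  let ?T = "gkp a b c a' b' c' n"
  have out: "?T (int n + 1) = 0" "?T (1 + int n) = 0" "?T (-1) = 0"
    by (auto intro!: gkp_eq_0_outside)
  have "gkp_row a b c a' b' c' (Suc n) t =
      (\<Sum>k\<le>Suc n. (a * of_nat n + b * of_nat k + c) * ?T (int k) * t ^ k)
      + (\<Sum>k\<le>Suc n. (a' * of_nat n + b' * of_int (int k - 1) + c') * ?T (int k - 1) * t ^ k)"
    by (simp add: gkp_row_def sum.distrib[symmetric] algebra_simps)
  also have "(\<Sum>k\<le>Suc n. (a * of_nat n + b * of_nat k + c) * ?T (int k) * t ^ k)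
      = (\<Sum>k\<le>n. (a * of_nat n + b * of_nat k + c) * ?T (int k) * t ^ k)"
    using out by simp
  also have "(\<Sum>k\<le>Suc n. (a' * of_nat n + b' * of_int (int k - 1) + c') * ?T (int k - 1) * t ^ k)
      = (\<Sum>k\<le>n. (a' * of_nat n + b' * of_nat k + c') * ?T (int k) * t ^ Suc k)"
    by (subst sum.atMost_Suc_shift) (simp add: out)
  also have "(\<Sum>k\<le>n. (a * of_nat n + b * of_nat k + c) * ?T (int k) * t ^ k)
      + (\<Sum>k\<le>n. (a' * of_nat n + b' * of_nat k + c') * ?T (int k) * t ^ Suc k)
      = (\<Sum>k\<le>n. (a * of_nat n + c + (a' * of_nat n + c') * t) * (?T (int k) * t ^ k)
          + (b + b' * t) * (of_nat k * ?T (int k) * t ^ k))"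
    by (simp add: sum.distrib[symmetric] algebra_simps)
  also have "\<dots> = (a * of_nat n + c + (a' * of_nat n + c') * t) * gkp_row a b c a' b' c' n t
      + (b + b' * t) * (t * deriv (gkp_row a b c a' b' c' n) t)"
    by (simp add: gkp_row_euler_operator gkp_row_def sum.distrib sum_distrib_left)
  finally show ?thesis .
qed

lemma gkp_row_unique_solution:
  fixes u u' :: "nat \<Rightarrow> complex \<Rightarrow> complex"
  assumes "open S"
    and init: "\<And>t. t \<in> S \<Longrightarrow> u 0 t = 1"
    and der: "\<And>n t. t \<in> S \<Longrightarrow> (u n has_field_derivative u' n t) (at t)"
    and rec: "\<And>n t. t \<in> S \<Longrightarrow> of_nat (Suc n) * u (Suc n) t =
       (a * of_nat n + c + (a' * of_nat n + c') * t) * u n t + (b + b' * t) * (t * u' n t)"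
    and "t \<in> S"
  shows "u n t = gkp_row a b c a' b' c' n t / fact n"
  using \<open>t \<in> S\<close>
proof (induction n arbitrary: t)
  case 0
  then show ?case by (simp add: init)
next
  case (Suc n)
  let ?p = "gkp_row a b c a' b' c' n"
  have "((\<lambda>t. ?p t / fact n) has_field_derivative u' n t) (at t)"
    using has_field_derivative_transform_within_open[OF der \<open>open S\<close>] Suc by metis
  moreover have "((\<lambda>t. ?p t / fact n) has_field_derivative deriv ?p t / fact n) (at t)"
    by (intro DERIV_cdivide DERIV_deriv_iff_field_differentiable[THEN iffD2])
       (use gkp_row_has_field_derivative field_differentiable_def in blast)
  ultimately have u': "u' n t = deriv ?p t / fact n"
    by (rule DERIV_unique)
  have "of_nat (Suc n) * u (Suc n) t = gkp_row a b c a' b' c' (Suc n) t / fact n"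
    unfolding rec[OF Suc.prems] Suc.IH[OF Suc.prems] u' gkp_row_Suc by (simp add: add_divide_distrib)
  then show ?case
    by (simp add: field_simps del: of_nat_Suc)
qed

section \<open>Generating functions solving the GKP equation\<close>

lemma fps_expansion_first_order_ode:
  fixes f g :: "complex \<Rightarrow> complex"
  assumes "0 < \<rho>" "f holomorphic_on ball 0 \<rho>" "g holomorphic_on ball 0 \<rho>"
    and ode: "\<And>z. z \<in> ball 0 \<rho> \<Longrightarrow> (1 - c * z) * deriv f z = u * g z + v * f z"
  shows "of_nat (Suc n) * fps_nth (fps_expansion f 0) (Suc n)
      = c * of_nat n * fps_nth (fps_expansion f 0) n
        + u * fps_nth (fps_expansion g 0) n + v * fps_nth (fps_expansion f 0) n"
proof -
  define E where "E = fps_expansion f 0"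
  have f: "f has_fps_expansion E" and g: "g has_fps_expansion fps_expansion g 0"
    using has_fps_expansion_fps_expansion[of "ball 0 \<rho>"] assms unfolding E_def by auto
  have "eventually (\<lambda>z. z \<in> ball 0 \<rho>) (nhds 0)"
    using \<open>0 < \<rho>\<close> by (intro eventually_nhds_in_open) auto
  then have ev: "eventually (\<lambda>z. (1 - c * z) * deriv f z = u * g z + v * f z) (nhds 0)"
    by eventually_elim (rule ode)
  have "(\<lambda>z. (1 - c * z) * deriv f z) has_fps_expansion (1 - fps_const c * fps_X) * fps_deriv E"
    by (intro has_fps_expansion_mult has_fps_expansion_diff has_fps_expansion_deriv f
        has_fps_expansion_cmult_left has_fps_expansion_fps_X has_fps_expansion_1)
  then have "(\<lambda>z. u * g z + v * f z) has_fps_expansion (1 - fps_const c * fps_X) * fps_deriv E"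
    using has_fps_expansion_cong[OF ev refl] by blast
  moreover have "(\<lambda>z. u * g z + v * f z) has_fps_expansion fps_const u * fps_expansion g 0 + fps_const v * E"
    by (intro has_fps_expansion_add has_fps_expansion_cmult_left f g)
  ultimately have "(1 - fps_const c * fps_X) * fps_deriv E = fps_const u * fps_expansion g 0 + fps_const v * E"
    by (rule fps_expansion_unique_complex)
  from arg_cong[where f = "\<lambda>F. fps_nth F n", OF this] show ?thesis
    unfolding E_def by (cases n) (simp_all add: algebra_simps)
qed

lemma higher_deriv_eq_circlepath_integral:
  fixes h :: "complex \<Rightarrow> complex"
  assumes "h holomorphic_on ball w0 \<rho>" "0 < r" "r < \<rho>"
  shows "(deriv ^^ n) h w0 = fact n / (2 * pi * \<i>) *
     integral {0..1} (\<lambda>x. h (circlepath w0 r x) / (circlepath w0 r x - w0) ^ Suc n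
        * vector_derivative (circlepath w0 r) (at x))"
proof -
  have "cball w0 r \<subseteq> ball w0 \<rho>"
    using assms by auto
  then have "continuous_on (cball w0 r) h" "h holomorphic_on ball w0 r"
    using assms(1) holomorphic_on_subset holomorphic_on_imp_continuous_on by (blast, force)
  then have "((\<lambda>u. h u / (u - w0) ^ Suc n) has_contour_integral (2 * pi * \<i>) / fact n * (deriv ^^ n) h w0)
      (circlepath w0 r)"
    by (rule Cauchy_has_contour_integral_higher_derivative_circlepath) (use assms in simp)
  then show ?thesis
    using contour_integral_unique unfolding contour_integral_integral by (force simp: field_simps)
qed

text \<open>Cauchy's formula writes the Taylor coefficient as an integral over a circle that does not
  depend on the parameter, so it can be differentiated under the integral sign.\<close>

lemma higher_deriv_has_field_derivative_param:
  fixes f f' :: "complex \<Rightarrow> complex \<Rightarrow> complex"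
  assumes "open S" "t0 \<in> S" "0 < r" "r < \<rho>"
    and hol: "\<And>t. t \<in> S \<Longrightarrow> f t holomorphic_on ball w0 \<rho>"
    and hol': "\<And>t. t \<in> S \<Longrightarrow> f' t holomorphic_on ball w0 \<rho>"
    and der: "\<And>t w. t \<in> S \<Longrightarrow> w \<in> sphere w0 r \<Longrightarrow> ((\<lambda>t. f t w) has_field_derivative f' t w) (at t)"
    and cont: "continuous_on (S \<times> sphere w0 r) (\<lambda>(t, w). f' t w)"
  shows "((\<lambda>t. (deriv ^^ n) (f t) w0) has_field_derivative (deriv ^^ n) (f' t0) w0) (at t0)"
proof -
  obtain e where "e > 0" and U_sub: "ball t0 e \<subseteq> S"
    using \<open>open S\<close> \<open>t0 \<in> S\<close> open_contains_ball by blast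
  define U where "U = ball t0 e"
  define \<gamma> where "\<gamma> = circlepath w0 r"
  define \<gamma>' where "\<gamma>' x = vector_derivative \<gamma> (at x)" for x
  define I where "I h = integral {0..1} (\<lambda>x. h (\<gamma> x) / (\<gamma> x - w0) ^ Suc n * \<gamma>' x)" for h
  have \<gamma>_sphere: "\<gamma> x \<in> sphere w0 r" for x
    using \<open>0 < r\<close> by (simp add: \<gamma>_def circlepath dist_norm norm_mult)
  have \<gamma>_ne: "\<gamma> x - w0 \<noteq> 0" for x
    using \<gamma>_sphere[of x] \<open>0 < r\<close> by auto
  have cont_\<gamma>: "continuous_on A \<gamma>" "continuous_on A \<gamma>'" for A
    unfolding \<gamma>'_def \<gamma>_def vector_derivative_circlepath unfolding circlepath
    by (intro continuous_intros)+
  have coeff: "(deriv ^^ n) h w0 = fact n / (2 * pi * \<i>) * I h" if "h holomorphic_on ball w0 \<rho>" for h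
    using higher_deriv_eq_circlepath_integral[OF that \<open>0 < r\<close> \<open>r < \<rho>\<close>]
    unfolding I_def \<gamma>'_def \<gamma>_def .
  have cont_f: "continuous_on A (\<lambda>x. g (\<gamma> x) / (\<gamma> x - w0) ^ Suc n * \<gamma>' x)"
    if "g holomorphic_on ball w0 \<rho>" for g A
  proof -
    have "sphere w0 r \<subseteq> ball w0 \<rho>"
      using \<open>r < \<rho>\<close> by auto
    then have "continuous_on (sphere w0 r) g"
      by (rule holomorphic_on_imp_continuous_on[OF holomorphic_on_subset[OF that]])
    then have "continuous_on A (\<lambda>x. g (\<gamma> x))"
      by (rule continuous_on_compose2[OF _ cont_\<gamma>(1)]) (auto intro: \<gamma>_sphere)
    then show ?thesis
      using \<gamma>_ne by (intro continuous_intros cont_\<gamma>) auto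
  qed
  have "((\<lambda>t. integral (cbox 0 1) (\<lambda>x. f t (\<gamma> x) / (\<gamma> x - w0) ^ Suc n * \<gamma>' x)) has_field_derivative
      integral (cbox 0 1) (\<lambda>x. f' t0 (\<gamma> x) / (\<gamma> x - w0) ^ Suc n * \<gamma>' x)) (at t0 within U)"
  proof (rule leibniz_rule_field_derivative)
    fix t x assume "t \<in> U"
    then have "t \<in> S"
      using U_sub U_def by auto
    show "((\<lambda>t. f t (\<gamma> x) / (\<gamma> x - w0) ^ Suc n * \<gamma>' x) has_field_derivative
        f' t (\<gamma> x) / (\<gamma> x - w0) ^ Suc n * \<gamma>' x) (at t within U)"
      using der[OF \<open>t \<in> S\<close> \<gamma>_sphere]
      by (intro DERIV_cmult_right DERIV_cdivide) (rule has_field_derivative_at_within)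
    show "(\<lambda>x. f t (\<gamma> x) / (\<gamma> x - w0) ^ Suc n * \<gamma>' x) integrable_on cbox 0 1"
      by (rule integrable_continuous[OF cont_f[OF hol[OF \<open>t \<in> S\<close>]]])
  next
    have "continuous_on (U \<times> cbox 0 1) (\<lambda>p. f' (fst p) (\<gamma> (snd p)))"
    proof (rule continuous_on_compose2[OF cont, of _ "\<lambda>p. (fst p, \<gamma> (snd p))", unfolded case_prod_unfold fst_conv snd_conv])
      show "continuous_on (U \<times> cbox 0 1) (\<lambda>p. (fst p, \<gamma> (snd p)))"
        by (intro continuous_intros continuous_on_compose2[OF cont_\<gamma>(1)]) auto
      show "(\<lambda>p. (fst p, \<gamma> (snd p))) ` (U \<times> cbox 0 1) \<subseteq> S \<times> sphere w0 r"
        using U_sub \<gamma>_sphere unfolding U_def by auto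
    qed
    then show "continuous_on (U \<times> cbox 0 1) (\<lambda>(t, x). f' t (\<gamma> x) / (\<gamma> x - w0) ^ Suc n * \<gamma>' x)"
      unfolding case_prod_unfold using \<gamma>_ne
      by (intro continuous_intros continuous_on_compose2[OF cont_\<gamma>(1)] continuous_on_compose2[OF cont_\<gamma>(2)]) auto
  qed (use \<open>e > 0\<close> U_def in auto)
  then have "((\<lambda>t. fact n / (2 * pi * \<i>) * I (f t)) has_field_derivative fact n / (2 * pi * \<i>) * I (f' t0)) (at t0)"
    unfolding U_def I_def at_within_open[OF centre_in_ball[THEN iffD2, OF \<open>e > 0\<close>] open_ball]
    by (intro DERIV_cmult) (simp add: cbox_interval)
  then have "((\<lambda>t. fact n / (2 * pi * \<i>) * I (f t)) has_field_derivative (deriv ^^ n) (f' t0) w0) (at t0)"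
    by (simp add: coeff[OF hol'[OF \<open>t0 \<in> S\<close>]])
  then show ?thesis
    by (rule has_field_derivative_transform_within_open[where S = "ball t0 e"])
       (use \<open>e > 0\<close> coeff[OF hol] U_sub in auto)
qed

theorem gkp_egf_of_pde:
  fixes F Ft :: "complex \<Rightarrow> complex \<Rightarrow> complex"
  assumes "open S" "0 < \<rho>"
    and hol: "\<And>t. t \<in> S \<Longrightarrow> F t holomorphic_on ball 0 \<rho>"
    and hol_t: "\<And>t. t \<in> S \<Longrightarrow> Ft t holomorphic_on ball 0 \<rho>"
    and der_t: "\<And>t z. t \<in> S \<Longrightarrow> z \<in> ball 0 \<rho> \<Longrightarrow> ((\<lambda>t. F t z) has_field_derivative Ft t z) (at t)"
    and cont_t: "continuous_on (S \<times> ball 0 \<rho>) (\<lambda>(t, z). Ft t z)"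
    and init: "\<And>t. t \<in> S \<Longrightarrow> F t 0 = 1"
    and pde: "\<And>t z. t \<in> S \<Longrightarrow> z \<in> ball 0 \<rho> \<Longrightarrow>
      (1 - (a + a' * t) * z) * deriv (F t) z = (b + b' * t) * t * Ft t z + (c + c' * t) * F t z"
    and "t \<in> S" "z \<in> ball 0 \<rho>"
  shows "(\<lambda>n. gkp_row a b c a' b' c' n t * z ^ n / fact n) sums F t z"
proof -
  define u where "u n t = fps_nth (fps_expansion (F t) 0) n" for n t
  define u' where "u' n t = fps_nth (fps_expansion (Ft t) 0) n" for n t
  have "u n t = gkp_row a b c a' b' c' n t / fact n" for n
  proof (rule gkp_row_unique_solution[OF \<open>open S\<close> _ _ _ \<open>t \<in> S\<close>])
    show "u 0 t = 1" if "t \<in> S" for t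
      using init[OF that] by (simp add: u_def fps_expansion_def)
    show "(u n has_field_derivative u' n t) (at t)" if "t \<in> S" for n t
    proof -
      have "continuous_on (S \<times> sphere 0 (\<rho> / 2)) (\<lambda>(t, z). Ft t z)"
        using \<open>0 < \<rho>\<close> by (auto intro: continuous_on_subset[OF cont_t])
      then have "((\<lambda>t. (deriv ^^ n) (F t) 0) has_field_derivative (deriv ^^ n) (Ft t) 0) (at t)"
        using \<open>0 < \<rho>\<close> der_t
        by (intro higher_deriv_has_field_derivative_param[OF \<open>open S\<close> that _ _ hol hol_t]) auto
      then show ?thesis
        unfolding u_def u'_def fps_expansion_def by (simp add: DERIV_cdivide)
    qed
    show "of_nat (Suc n) * u (Suc n) t =
        (a * of_nat n + c + (a' * of_nat n + c') * t) * u n t + (b + b' * t) * (t * u' n t)"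
      if "t \<in> S" for n t
      using fps_expansion_first_order_ode[OF \<open>0 < \<rho>\<close> hol[OF that] hol_t[OF that] pde[OF that], of n]
      unfolding u_def u'_def by (simp add: algebra_simps)
  qed
  then show ?thesis
    using holomorphic_power_series[OF hol[OF \<open>t \<in> S\<close>] \<open>z \<in> ball 0 \<rho>\<close>]
    by (simp add: u_def fps_expansion_def)
qed

section \<open>The closed form for \<open>(r\<^sub>0, r\<^sub>1, r\<^sub>\<infinity>) = (-1/2, -1/2, 2)\<close>\<close>

lemma has_field_derivative_Ln_divide:
  assumes "(f has_field_derivative f') (at x)" "(g has_field_derivative g') (at x)"
    and "f x / g x \<notin> \<real>\<^sub>\<le>\<^sub>0"
  shows "((\<lambda>x. Ln (f x / g x)) has_field_derivative f' / f x - g' / g x) (at x)"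
proof -
  have "f x \<noteq> 0" "g x \<noteq> 0"
    using assms(3) by auto
  have "((\<lambda>x. f x / g x) has_field_derivative (f' * g x - f x * g') / (g x * g x)) (at x)"
    by (rule DERIV_divide[OF assms(1,2) \<open>g x \<noteq> 0\<close>])
  from DERIV_chain2[OF has_field_derivative_Ln[OF assms(3)] this]
  show ?thesis
    by (rule DERIV_cong) (use \<open>f x \<noteq> 0\<close> \<open>g x \<noteq> 0\<close> in \<open>simp add: field_simps\<close>)
qed

lemma sroot5_squared: "sroot5 t z ^ 2 = 4 + 8 * (t - 1/2) * z + z ^ 2"
  by (simp add: sroot5_def)

lemma sroot5_eq_0_iff: "sroot5 t z = 0 \<longleftrightarrow> 4 + 8 * (t - 1/2) * z + z ^ 2 = 0"
  by (simp add: sroot5_def)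

lemma s_minus5_eq: "s_minus5 t z = 1 - s_plus5 t z"
  by (simp add: s_minus5_def s_plus5_def)

lemma sroot5_at_0 [simp]: "sroot5 t 0 = 2"
  unfolding sroot5_def by (rule csqrt_unique) auto

lemma s_plus5_at_0 [simp]: "s_plus5 t 0 = t"
  by (simp add: s_plus5_def field_simps)

lemma s_minus5_at_0 [simp]: "s_minus5 t 0 = 1 - t"
  by (simp add: s_minus5_eq)

lemma sroot5_has_field_derivative_z:
  assumes "4 + 8 * (t - 1/2) * z + z ^ 2 \<notin> \<real>\<^sub>\<le>\<^sub>0"
  shows "((\<lambda>z. sroot5 t z) has_field_derivative (4 * (t - 1/2) + z) / sroot5 t z) (at z)"
proof -
  have "sroot5 t z \<noteq> 0"
    using assms by (auto simp: sroot5_eq_0_iff)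
  have "((\<lambda>z. 4 + 8 * (t - 1/2) * z + z ^ 2) has_field_derivative 8 * (t - 1/2) + 2 * z) (at z)"
    by (auto intro!: derivative_eq_intros)
  from DERIV_chain2[OF has_field_derivative_csqrt[OF assms] this]
  show ?thesis
    unfolding sroot5_def
    by (rule DERIV_cong) (use \<open>sroot5 t z \<noteq> 0\<close> in \<open>simp add: sroot5_def field_simps\<close>)
qed

lemma sroot5_has_field_derivative_t:
  assumes "4 + 8 * (t - 1/2) * z + z ^ 2 \<notin> \<real>\<^sub>\<le>\<^sub>0"
  shows "((\<lambda>t. sroot5 t z) has_field_derivative 4 * z / sroot5 t z) (at t)"
proof -
  have "sroot5 t z \<noteq> 0"
    using assms by (auto simp: sroot5_eq_0_iff)
  have "((\<lambda>t. 4 + 8 * (t - 1/2) * z + z ^ 2) has_field_derivative 8 * z) (at t)"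
    by (auto intro!: derivative_eq_intros)
  from DERIV_chain2[OF has_field_derivative_csqrt[OF assms] this]
  show ?thesis
    unfolding sroot5_def
    by (rule DERIV_cong) (use \<open>sroot5 t z \<noteq> 0\<close> in \<open>simp add: sroot5_def field_simps\<close>)
qed

lemma s_plus5_has_field_derivative_z:
  assumes "4 + 8 * (t - 1/2) * z + z ^ 2 \<notin> \<real>\<^sub>\<le>\<^sub>0"
  shows "((\<lambda>z. s_plus5 t z) has_field_derivative 8 * t * (1 - t) / sroot5 t z ^ 3) (at z)"
proof -
  define R P where "R = sroot5 t z" and "P = 4 * (t - 1/2) + z"
  have "R \<noteq> 0"
    using assms by (auto simp: R_def sroot5_eq_0_iff)
  have "((\<lambda>z. 4 * (t - 1/2) + z) has_field_derivative 1) (at z)"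
    by (auto intro!: derivative_eq_intros)
  moreover have "((\<lambda>z. 2 * sroot5 t z) has_field_derivative 2 * (P / R)) (at z)"
    unfolding P_def R_def by (intro DERIV_cmult sroot5_has_field_derivative_z assms)
  ultimately have deriv: "((\<lambda>z. s_plus5 t z) has_field_derivative
      0 + (1 * (2 * R) - P * (2 * (P / R))) / ((2 * R) * (2 * R))) (at z)"
    using \<open>R \<noteq> 0\<close> unfolding s_plus5_def P_def R_def by (intro DERIV_add DERIV_const DERIV_divide) auto
  have "0 + (1 * (2 * R) - P * (2 * (P / R))) / ((2 * R) * (2 * R)) = (R ^ 2 - P ^ 2) / (2 * R ^ 3)"
    using \<open>R \<noteq> 0\<close> by (simp add: field_simps power2_eq_square power3_eq_cube)
  also have "R ^ 2 - P ^ 2 = 16 * t * (1 - t)"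
    unfolding R_def P_def sroot5_squared by (simp add: algebra_simps power2_eq_square)
  finally have "0 + (1 * (2 * R) - P * (2 * (P / R))) / ((2 * R) * (2 * R)) = 8 * t * (1 - t) / R ^ 3"
    by simp
  with deriv show ?thesis
    unfolding R_def by simp
qed

lemma s_plus5_has_field_derivative_t:
  assumes "4 + 8 * (t - 1/2) * z + z ^ 2 \<notin> \<real>\<^sub>\<le>\<^sub>0"
  shows "((\<lambda>t. s_plus5 t z) has_field_derivative 8 * (1 + (t - 1/2) * z) / sroot5 t z ^ 3) (at t)"
proof -
  define R P where "R = sroot5 t z" and "P = 4 * (t - 1/2) + z"
  have "R \<noteq> 0"
    using assms by (auto simp: R_def sroot5_eq_0_iff)
  have "((\<lambda>t. 4 * (t - 1/2) + z) has_field_derivative 4) (at t)"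
    by (auto intro!: derivative_eq_intros)
  moreover have "((\<lambda>t. 2 * sroot5 t z) has_field_derivative 2 * (4 * z / R)) (at t)"
    unfolding R_def by (intro DERIV_cmult sroot5_has_field_derivative_t assms)
  ultimately have deriv: "((\<lambda>t. s_plus5 t z) has_field_derivative
      0 + (4 * (2 * R) - P * (2 * (4 * z / R))) / ((2 * R) * (2 * R))) (at t)"
    using \<open>R \<noteq> 0\<close> unfolding s_plus5_def P_def R_def by (intro DERIV_add DERIV_const DERIV_divide) auto
  have "0 + (4 * (2 * R) - P * (2 * (4 * z / R))) / ((2 * R) * (2 * R)) = 2 * (R ^ 2 - P * z) / R ^ 3"
    using \<open>R \<noteq> 0\<close> by (simp add: field_simps power2_eq_square power3_eq_cube)
  also have "R ^ 2 - P * z = 4 * (1 + (t - 1/2) * z)"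
    unfolding R_def P_def sroot5_squared by (simp add: algebra_simps power2_eq_square)
  finally have "0 + (4 * (2 * R) - P * (2 * (4 * z / R))) / ((2 * R) * (2 * R)) = 8 * (1 + (t - 1/2) * z) / R ^ 3"
    by simp
  with deriv show ?thesis
    unfolding R_def by simp
qed

text \<open>In this form \<open>s\<^sub>+/t\<close> extends continuously to \<open>t = 0\<close>, with value \<open>1\<close> at the origin.\<close>

lemma s_plus5_eq_rationalized:
  assumes "sroot5 t z \<noteq> 0" "sroot5 t z + 2 - z - 4 * t \<noteq> 0"
  shows "s_plus5 t z = 8 * t * (1 - t) / (sroot5 t z * (sroot5 t z + 2 - z - 4 * t))"
proof -
  define R D where "R = sroot5 t z" and "D = sroot5 t z + 2 - z - 4 * t"
  have "(R + (4 * t - 2 + z)) * D = R ^ 2 - (4 * t - 2 + z) ^ 2"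
    unfolding D_def R_def by (simp add: algebra_simps power2_eq_square)
  also have "\<dots> = 16 * t * (1 - t)"
    unfolding R_def sroot5_squared by (simp add: algebra_simps power2_eq_square)
  finally have key: "(R + (4 * t - 2 + z)) * D = 16 * t * (1 - t)" .
  have "R \<noteq> 0" "D \<noteq> 0"
    using assms by (simp_all add: R_def D_def)
  have "s_plus5 t z = (R + (4 * t - 2 + z)) / (2 * R)"
    using \<open>R \<noteq> 0\<close> unfolding s_plus5_def R_def[symmetric] by (simp add: field_simps)
  also have "\<dots> = (R + (4 * t - 2 + z)) * D / (2 * R * D)"
    using \<open>D \<noteq> 0\<close> by simp
  also have "\<dots> = 8 * t * (1 - t) / (R * D)"
    unfolding key using \<open>R \<noteq> 0\<close> \<open>D \<noteq> 0\<close> by (simp add: field_simps)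
  finally show ?thesis
    unfolding R_def D_def .
qed

definition regular5 :: "complex \<Rightarrow> complex \<Rightarrow> bool" where
  "regular5 t z \<longleftrightarrow> 4 + 8 * (t - 1/2) * z + z ^ 2 \<notin> \<real>\<^sub>\<le>\<^sub>0
     \<and> s_plus5 t z / t \<notin> \<real>\<^sub>\<le>\<^sub>0 \<and> s_minus5 t z / (1 - t) \<notin> \<real>\<^sub>\<le>\<^sub>0"

text \<open>\<open>t \<noteq> 0\<close> and \<open>t \<noteq> 1\<close> come for free: \<open>x / 0 = 0\<close> lies in \<open>\<real>\<^sub>\<le>\<^sub>0\<close>.\<close>

lemma regular5_nonzero:
  assumes "regular5 t z"
  shows "sroot5 t z \<noteq> 0" "t \<noteq> 0" "t \<noteq> 1" "s_plus5 t z \<noteq> 0" "s_minus5 t z \<noteq> 0"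
  using assms by (auto simp: regular5_def sroot5_eq_0_iff)

lemma regular5_near_origin:
  "\<exists>\<epsilon>>0. \<forall>t z. cmod t < \<epsilon> \<and> cmod z < \<epsilon> \<and> t \<noteq> 0 \<longrightarrow> regular5 t z"
proof -
  define Q where "Q p = 4 + 8 * (fst p - 1/2) * snd p + snd p ^ 2" for p :: "complex \<times> complex"
  define A where "A p = 8 * (1 - fst p) /
    (sroot5 (fst p) (snd p) * (sroot5 (fst p) (snd p) + 2 - snd p - 4 * fst p))" for p
  define B where "B p = s_minus5 (fst p) (snd p) / (1 - fst p)" for p
  have "isCont Q (0, 0)"
    unfolding Q_def by (intro continuous_intros)
  have "isCont (\<lambda>p. sroot5 (fst p) (snd p)) (0, 0)"
    unfolding sroot5_def by (intro continuous_intros isCont_csqrt') (auto simp: complex_nonpos_Reals_iff)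
  then have "isCont A (0, 0)" "isCont B (0, 0)"
    unfolding A_def B_def s_minus5_def s_plus5_def by (auto intro!: continuous_intros)
  moreover have "Q (0, 0) \<notin> \<real>\<^sub>\<le>\<^sub>0" "A (0, 0) \<notin> \<real>\<^sub>\<le>\<^sub>0" "B (0, 0) \<notin> \<real>\<^sub>\<le>\<^sub>0"
    by (simp_all add: Q_def A_def B_def complex_nonpos_Reals_iff)
  moreover have "eventually (\<lambda>p. f p \<notin> \<real>\<^sub>\<le>\<^sub>0) (at (0, 0))"
    if "isCont f (0, 0)" "f (0, 0) \<notin> \<real>\<^sub>\<le>\<^sub>0" for f :: "complex \<times> complex \<Rightarrow> complex"
    using topological_tendstoD[OF that(1)[unfolded isCont_def], of "- \<real>\<^sub>\<le>\<^sub>0"] that(2)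
    by (auto simp: open_Compl)
  ultimately have "eventually (\<lambda>p. Q p \<notin> \<real>\<^sub>\<le>\<^sub>0 \<and> A p \<notin> \<real>\<^sub>\<le>\<^sub>0 \<and> B p \<notin> \<real>\<^sub>\<le>\<^sub>0) (at (0, 0))"
    using \<open>isCont Q (0, 0)\<close> by (intro eventually_conj) auto
  then obtain d where "d > 0" and d: "\<And>p. p \<noteq> (0, 0) \<Longrightarrow> dist p (0, 0) < d \<Longrightarrow>
      Q p \<notin> \<real>\<^sub>\<le>\<^sub>0 \<and> A p \<notin> \<real>\<^sub>\<le>\<^sub>0 \<and> B p \<notin> \<real>\<^sub>\<le>\<^sub>0"
    unfolding eventually_at by auto
  have "regular5 t z" if "cmod t < d / 2" "cmod z < d / 2" "t \<noteq> 0" for t z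
  proof -
    have "dist (t, z) (0, 0) < d"
      using norm_Pair_le[of t z] that by (simp add: dist_norm)
    then have "Q (t, z) \<notin> \<real>\<^sub>\<le>\<^sub>0" "A (t, z) \<notin> \<real>\<^sub>\<le>\<^sub>0" "B (t, z) \<notin> \<real>\<^sub>\<le>\<^sub>0"
      using d[of "(t, z)"] \<open>t \<noteq> 0\<close> by auto
    moreover from this(2) have "sroot5 t z \<noteq> 0" "sroot5 t z + 2 - z - 4 * t \<noteq> 0"
      by (auto simp: A_def)
    then have "s_plus5 t z / t = A (t, z)"
      using \<open>t \<noteq> 0\<close> by (simp add: s_plus5_eq_rationalized A_def)
    ultimately show ?thesis
      by (simp add: regular5_def Q_def B_def)
  qed
  then show ?thesis
    using \<open>d > 0\<close> by (intro exI[of _ "d / 2"]) auto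
qed

definition closed_log5 :: "complex \<Rightarrow> complex \<Rightarrow> complex \<Rightarrow> complex \<Rightarrow> complex" where
  "closed_log5 g0 g1 t z = g0 * Ln (s_plus5 t z / t) + g1 * Ln (s_minus5 t z / (1 - t))"

definition closed_log5_dt :: "complex \<Rightarrow> complex \<Rightarrow> complex \<Rightarrow> complex \<Rightarrow> complex" where
  "closed_log5_dt g0 g1 t z =
     g0 * (8 * (1 + (t - 1/2) * z) / sroot5 t z ^ 3 / s_plus5 t z - 1 / t)
     + g1 * (1 / (1 - t) - 8 * (1 + (t - 1/2) * z) / sroot5 t z ^ 3 / s_minus5 t z)"

lemma closed_log5_has_field_derivative_z:
  assumes "regular5 t z"
  shows "((\<lambda>z. closed_log5 g0 g1 t z) has_field_derivative
      (g0 / s_plus5 t z - g1 / s_minus5 t z) * (8 * t * (1 - t) / sroot5 t z ^ 3)) (at z)"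
proof -
  define D where "D = 8 * t * (1 - t) / sroot5 t z ^ 3"
  have Q: "4 + 8 * (t - 1/2) * z + z ^ 2 \<notin> \<real>\<^sub>\<le>\<^sub>0"
    and A: "s_plus5 t z / t \<notin> \<real>\<^sub>\<le>\<^sub>0" and B: "s_minus5 t z / (1 - t) \<notin> \<real>\<^sub>\<le>\<^sub>0"
    using assms by (auto simp: regular5_def)
  have dplus: "((\<lambda>z. s_plus5 t z) has_field_derivative D) (at z)"
    unfolding D_def by (rule s_plus5_has_field_derivative_z[OF Q])
  have dminus: "((\<lambda>z. s_minus5 t z) has_field_derivative 0 - D) (at z)"
    unfolding s_minus5_eq by (intro DERIV_diff DERIV_const dplus)
  have "((\<lambda>z. closed_log5 g0 g1 t z) has_field_derivative
      g0 * (D / s_plus5 t z - 0 / t) + g1 * ((0 - D) / s_minus5 t z - 0 / (1 - t))) (at z)"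
    unfolding closed_log5_def
    by (intro DERIV_add DERIV_cmult has_field_derivative_Ln_divide DERIV_const dplus dminus A B)
  then show ?thesis
    by (rule DERIV_cong) (simp add: D_def algebra_simps diff_divide_distrib)
qed

lemma closed_log5_has_field_derivative_t:
  assumes "regular5 t z"
  shows "((\<lambda>t. closed_log5 g0 g1 t z) has_field_derivative closed_log5_dt g0 g1 t z) (at t)"
proof -
  define D where "D = 8 * (1 + (t - 1/2) * z) / sroot5 t z ^ 3"
  have Q: "4 + 8 * (t - 1/2) * z + z ^ 2 \<notin> \<real>\<^sub>\<le>\<^sub>0"
    and A: "s_plus5 t z / t \<notin> \<real>\<^sub>\<le>\<^sub>0" and B: "s_minus5 t z / (1 - t) \<notin> \<real>\<^sub>\<le>\<^sub>0"
    using assms by (auto simp: regular5_def)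
  have dplus: "((\<lambda>t. s_plus5 t z) has_field_derivative D) (at t)"
    unfolding D_def by (rule s_plus5_has_field_derivative_t[OF Q])
  have dminus: "((\<lambda>t. s_minus5 t z) has_field_derivative 0 - D) (at t)"
    unfolding s_minus5_eq by (intro DERIV_diff DERIV_const dplus)
  have "((\<lambda>t. closed_log5 g0 g1 t z) has_field_derivative
      g0 * (D / s_plus5 t z - 1 / t) + g1 * ((0 - D) / s_minus5 t z - (0 - 1) / (1 - t))) (at t)"
    unfolding closed_log5_def
    by (intro DERIV_add DERIV_cmult has_field_derivative_Ln_divide DERIV_diff DERIV_const DERIV_ident
        dplus dminus A B)
  then show ?thesis
    by (rule DERIV_cong) (simp add: closed_log5_dt_def D_def algebra_simps diff_divide_distrib)
qed

text \<open>Both partial derivatives of \<open>s\<^sub>+\<close> carry the factor \<open>8/sroot5\<^sup>3\<close>, so \<open>s\<^sub>+\<close> is a first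
  integral of \<open>(1 + (t - 1/2)z)\<partial>\<^sub>z - t(1-t)\<partial>\<^sub>t\<close>.\<close>

lemma closed_log5_pde:
  assumes "regular5 t z"
  shows "(1 + (t - 1/2) * z) * ((g0 / s_plus5 t z - g1 / s_minus5 t z) * (8 * t * (1 - t) / sroot5 t z ^ 3))
    = t * (1 - t) * closed_log5_dt g0 g1 t z + (g0 * (1 - t) - g1 * t)"
  using regular5_nonzero[OF assms] by (simp add: closed_log5_dt_def field_simps)

lemma exp_closed_log5_pde:
  assumes "regular5 t z"
  shows "(1 + (t - 1/2) * z) * deriv (\<lambda>z. exp (closed_log5 g0 g1 t z)) z
    = t * (1 - t) * (exp (closed_log5 g0 g1 t z) * closed_log5_dt g0 g1 t z)
      + (g0 * (1 - t) - g1 * t) * exp (closed_log5 g0 g1 t z)"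
proof -
  let ?E = "exp (closed_log5 g0 g1 t z)"
  have "(1 + (t - 1/2) * z) * deriv (\<lambda>z. exp (closed_log5 g0 g1 t z)) z
      = ?E * ((1 + (t - 1/2) * z) * ((g0 / s_plus5 t z - g1 / s_minus5 t z) * (8 * t * (1 - t) / sroot5 t z ^ 3)))"
    using DERIV_imp_deriv[OF DERIV_fun_exp[OF closed_log5_has_field_derivative_z[OF assms]]] by simp
  also have "\<dots> = ?E * (t * (1 - t) * closed_log5_dt g0 g1 t z + (g0 * (1 - t) - g1 * t))"
    unfolding closed_log5_pde[OF assms] ..
  finally show ?thesis
    by (simp add: algebra_simps)
qed

lemma holomorphic_on_closed_log5:
  assumes "\<And>z. z \<in> B \<Longrightarrow> regular5 t z"
  shows "(\<lambda>z. closed_log5 g0 g1 t z) holomorphic_on B" "(\<lambda>z. closed_log5_dt g0 g1 t z) holomorphic_on B"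
proof -
  have Q: "4 + 8 * (t - 1/2) * z + z ^ 2 \<notin> \<real>\<^sub>\<le>\<^sub>0" if "z \<in> B" for z
    using assms[OF that] by (simp add: regular5_def)
  have "(\<lambda>z. sroot5 t z) holomorphic_on B"
    unfolding sroot5_def using Q by (intro holomorphic_intros)
  then have "(\<lambda>z. s_plus5 t z) holomorphic_on B" "(\<lambda>z. s_minus5 t z) holomorphic_on B"
    unfolding s_plus5_def s_minus5_def using regular5_nonzero[OF assms] by (auto intro!: holomorphic_intros)
  then show "(\<lambda>z. closed_log5 g0 g1 t z) holomorphic_on B" "(\<lambda>z. closed_log5_dt g0 g1 t z) holomorphic_on B"
    unfolding closed_log5_def closed_log5_dt_def using assms regular5_nonzero[OF assms] \<open>(\<lambda>z. sroot5 t z) holomorphic_on B\<close>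
    by (auto intro!: holomorphic_intros simp: regular5_def)
qed

lemma continuous_on_closed_log5:
  assumes "\<And>t z. (t, z) \<in> A \<Longrightarrow> regular5 t z"
  shows "continuous_on A (\<lambda>(t, z). closed_log5 g0 g1 t z)" "continuous_on A (\<lambda>(t, z). closed_log5_dt g0 g1 t z)"
proof -
  have reg: "regular5 (fst p) (snd p)" if "p \<in> A" for p
    using assms[of "fst p" "snd p"] that by simp
  note nz = regular5_nonzero[OF reg]
  have "continuous_on A (\<lambda>p. sroot5 (fst p) (snd p))"
    unfolding sroot5_def using reg
    by (intro continuous_on_compose2[OF continuous_on_csqrt] continuous_intros) (auto simp: regular5_def)
  moreover from this have "continuous_on A (\<lambda>p. s_plus5 (fst p) (snd p))" "continuous_on A (\<lambda>p. s_minus5 (fst p) (snd p))"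
    unfolding s_plus5_def s_minus5_def using nz by (auto intro!: continuous_intros)
  ultimately show "continuous_on A (\<lambda>(t, z). closed_log5 g0 g1 t z)" "continuous_on A (\<lambda>(t, z). closed_log5_dt g0 g1 t z)"
    unfolding closed_log5_def closed_log5_dt_def case_prod_unfold using reg nz
    by (auto intro!: continuous_intros simp: regular5_def)
qed

lemma closed_log5_at_0:
  assumes "t \<noteq> 0" "t \<noteq> 1"
  shows "closed_log5 g0 g1 t 0 = 0"
  using assms by (simp add: closed_log5_def)

lemma powr_closed_form5:
  assumes "regular5 t z"
  shows "(s_plus5 t z / t) powr g0 * (s_minus5 t z / (1 - t)) powr g1 = exp (closed_log5 g0 g1 t z)"
  using assms by (auto simp: regular5_def closed_log5_def powr_def exp_add mult.commute)

theorem mainTheorem5: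
  fixes g0 ginf :: complex
  shows "\<exists>\<epsilon>>0. \<forall>t z. cmod t < \<epsilon> \<and> cmod z < \<epsilon> \<and> t \<noteq> 0 \<longrightarrow>
     (\<lambda>n. (\<Sum>k\<le>n. gkp (1/2) 1 g0 (-1) (-1) ginf n (int k) * t ^ k) * z ^ n / of_nat (fact n))
       sums ((s_plus5 t z / t) powr g0 * (s_minus5 t z / (1 - t)) powr (- g0 - ginf))"
proof -
  obtain \<epsilon> where "\<epsilon> > 0" and regular: "\<And>t z. cmod t < \<epsilon> \<Longrightarrow> cmod z < \<epsilon> \<Longrightarrow> t \<noteq> 0 \<Longrightarrow> regular5 t z"
    using regular5_near_origin by blast
  define S :: "complex set" where "S = ball 0 \<epsilon> - {0}"
  define F where "F t z = exp (closed_log5 g0 (- g0 - ginf) t z)" for t z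
  define Ft where "Ft t z = F t z * closed_log5_dt g0 (- g0 - ginf) t z" for t z
  have reg: "regular5 t z" if "t \<in> S" "z \<in> ball 0 \<epsilon>" for t z
    using regular that by (auto simp: S_def)
  have "(\<lambda>n. gkp_row (1/2) 1 g0 (-1) (-1) ginf n t * z ^ n / fact n) sums F t z"
    if "t \<in> S" "z \<in> ball 0 \<epsilon>" for t z
  proof (rule gkp_egf_of_pde[where Ft = Ft, OF _ \<open>\<epsilon> > 0\<close> _ _ _ _ _ _ that])
    show "open S"
      by (simp add: S_def open_Diff)
    show "F t holomorphic_on ball 0 \<epsilon>" "Ft t holomorphic_on ball 0 \<epsilon>" if "t \<in> S" for t
      using holomorphic_on_closed_log5[of "ball 0 \<epsilon>", OF reg[OF that]] unfolding F_def Ft_def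
      by (auto intro!: holomorphic_intros)
    show "((\<lambda>t. F t z) has_field_derivative Ft t z) (at t)" if "t \<in> S" "z \<in> ball 0 \<epsilon>" for t z
      unfolding F_def Ft_def by (rule DERIV_fun_exp[OF closed_log5_has_field_derivative_t[OF reg[OF that]]])
    show "continuous_on (S \<times> ball 0 \<epsilon>) (\<lambda>(t, z). Ft t z)"
      using continuous_on_closed_log5[of "S \<times> ball 0 \<epsilon>"] reg unfolding F_def Ft_def case_prod_unfold
      by (auto intro!: continuous_intros)
    show "F t 0 = 1" if "t \<in> S" for t
      using regular5_nonzero[OF reg[OF that, of 0]] \<open>\<epsilon> > 0\<close> by (simp add: F_def closed_log5_at_0)
    show "(1 - (1/2 + - 1 * t) * z) * deriv (F t) z = (1 + - 1 * t) * t * Ft t z + (g0 + ginf * t) * F t z"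
      if "t \<in> S" "z \<in> ball 0 \<epsilon>" for t z
      using exp_closed_log5_pde[OF reg[OF that], of g0 "- g0 - ginf"]
      unfolding F_def Ft_def by (simp add: algebra_simps)
  qed
  then show ?thesis
    using \<open>\<epsilon> > 0\<close> regular powr_closed_form5
    by (intro exI[of _ \<epsilon>]) (auto simp: S_def F_def gkp_row_def)
qed

end
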